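(* Let $p$ be a prime and $q$ a power of $p$. For every integer $m \ge p$ and every $d \in \mathbb{F}_q$, there exists a monic polynomial $f \in \mathbb{F}_q[x]$ of degree $m$ with $\operatorname{disc}(f) = d$.
   Context: For $f$ of degree $m\ge 2$ with leading coefficient $a_m$ and roots $\alpha_1,\dots,\alpha_m$ in a splitting field, $\operatorname{disc}(f) = a_m^{2m-2}\prod_{i<j}(\alpha_i-\alpha_j)^2$; for linear $f$, $\operatorname{disc}(f) = 1$. *)

theory Defs
  imports "HOL-Algebra.Algebraic_Closure_Type"
begin

text \<open>Discriminant of a polynomial over a field, following the paper:
  for degree m \<ge> 2 with leading coefficient a and roots r_1..r_m (with multiplicity)
  in a splitting field (here: the algebraic closure), disc f = a^(2m-2) * prod_{i<j} (r_i - r_j)^2;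
  for linear f, disc f = 1.  The value lies in the base field; of_ac maps it back.\<close>

definition roots_ac :: "'a::field poly \<Rightarrow> 'a alg_closure list" where
  "roots_ac f = (SOME rs. mset rs = proots (map_poly to_ac f))"

definition disc :: "'a::field poly \<Rightarrow> 'a" where
  "disc f = (if degree f = 1 then 1 else
     of_ac (let rs = roots_ac f in
       to_ac (lead_coeff f) ^ (2 * degree f - 2) *
       (\<Prod>j<length rs. \<Prod>i<j. (rs ! i - rs ! j) ^ 2)))"

end

theory Submission
  imports Defs
begin

(* For monic f of degree m with f' = c (x - t_1) ... (x - t_k), the discriminant is
   (-1)^(m(m-1)/2) times the product of f' over the roots of f; swapping the double product turns it
   into (-1)^(m(m-1)/2) c^m prod_j (-1)^m f(t_j), a product of critical values of f. In
   characteristic p the monomials of degree divisible by p have zero derivative, so for each class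
   of m modulo p there is a monic f of degree m whose critical points lie among 0, 1 and one more
   point, with every critical value fixed except one, which is an affine function of y^p for a free
   parameter y. Since y |-> y^p is bijective on a finite field of characteristic p, every value d is
   attained. *)

lemma prod_list_map_mult:
  "(\<Prod>x\<leftarrow>xs. f x * g x) = (\<Prod>x\<leftarrow>xs. f x) * (\<Prod>x\<leftarrow>xs. g x)"
  for f g :: "'b \<Rightarrow> 'a::comm_monoid_mult"
  by (induction xs) (simp_all add: mult_ac)

lemma prod_list_map_const_mult:
  "(\<Prod>x\<leftarrow>xs. c * f x) = c ^ length xs * (\<Prod>x\<leftarrow>xs. f x)"
  for f :: "'b \<Rightarrow> 'a::comm_monoid_mult"
  by (induction xs) (simp_all add: mult_ac)

lemma prod_list_map_swap:
  "(\<Prod>x\<leftarrow>xs. \<Prod>y\<leftarrow>ys. g x y) = (\<Prod>y\<leftarrow>ys. \<Prod>x\<leftarrow>xs. g x y)"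
  for g :: "'b \<Rightarrow> 'c \<Rightarrow> 'a::comm_monoid_mult"
  by (induction xs) (simp_all add: prod_list_map_mult map_replicate_const)

lemma prod_list_map_nth: "(\<Prod>x\<leftarrow>xs. f x) = (\<Prod>i<length xs. f (xs ! i))"
  by (induction xs) (simp_all add: prod.lessThan_Suc_shift del: prod.lessThan_Suc)

lemma prod_list_map_diff_commute:
  "(\<Prod>x\<leftarrow>xs. y - x) = (-1) ^ length xs * (\<Prod>x\<leftarrow>xs. x - y)"
  for y :: "'a::comm_ring_1"
  by (induction xs) (simp_all add: algebra_simps)

lemma poly_prod_linear: "poly (\<Prod>x\<leftarrow>xs. [:-f x, 1:]) y = (\<Prod>x\<leftarrow>xs. y - f x)"
  for y :: "'a::comm_ring_1"
  by (induction xs) (simp_all add: algebra_simps)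

lemma prod_sq_diffs_eq_prod_pderiv:
  fixes rs :: "'a::idom list"
  defines "n \<equiv> length rs"
  shows "(\<Prod>j<n. \<Prod>i<j. (rs ! i - rs ! j) ^ 2) =
    (-1) ^ (n * (n - 1) div 2) * (\<Prod>x\<leftarrow>rs. poly (pderiv (\<Prod>r\<leftarrow>rs. [:-r, 1:])) x)"
  unfolding n_def
proof (induction rs rule: rev_induct)
  case (snoc y xs)
  define n where "n = length xs"
  define Q where "Q = (\<Prod>r\<leftarrow>xs. [:-r, 1:])"
  define P where "P = (\<Prod>r\<leftarrow>xs @ [y]. [:-r, 1:])"
  define D where "D = (\<Prod>x\<leftarrow>xs. x - y)"
  have P_snoc: "P = Q * [:-y, 1:]"
    by (simp add: P_def Q_def)
  have pderiv_snoc: "pderiv P = Q + [:-y, 1:] * pderiv Q"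
    unfolding P_snoc by (subst pderiv_mult) (simp add: pderiv_pCons)
  have "poly Q x = 0" if "x \<in> set xs" for x
    using that by (simp add: Q_def poly_prod_linear prod_list_zero_iff)
  then have old_roots: "(\<Prod>x\<leftarrow>xs. poly (pderiv P) x)
      = D * (\<Prod>x\<leftarrow>xs. poly (pderiv Q) x)"
    unfolding pderiv_snoc D_def prod_list_map_mult[symmetric]
    by (intro arg_cong[where f = prod_list] map_cong) (simp_all add: algebra_simps)
  have new_root: "poly (pderiv P) y = (-1) ^ n * D"
    unfolding pderiv_snoc by (simp add: Q_def D_def n_def poly_prod_linear prod_list_map_diff_commute)
  have last_row: "(\<Prod>i<n. ((xs @ [y]) ! i - (xs @ [y]) ! n) ^ 2) = D ^ 2"
    by (simp add: D_def n_def prod_list_map_nth nth_append prod_power_distrib)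
  have old_rows: "(\<Prod>j<n. \<Prod>i<j. ((xs @ [y]) ! i - (xs @ [y]) ! j) ^ 2)
      = (\<Prod>j<n. \<Prod>i<j. (xs ! i - xs ! j) ^ 2)"
    by (intro prod.cong refl) (simp add: nth_append n_def)
  have "length (xs @ [y]) = Suc n"
    by (simp add: n_def)
  then have lhs: "(\<Prod>j<length (xs @ [y]). \<Prod>i<j. ((xs @ [y]) ! i - (xs @ [y]) ! j) ^ 2)
      = (\<Prod>j<n. \<Prod>i<j. (xs ! i - xs ! j) ^ 2) * D ^ 2"
    by (simp only: prod.lessThan_Suc old_rows last_row)
  have rhs: "(\<Prod>x\<leftarrow>xs @ [y]. poly (pderiv P) x)
      = (-1) ^ n * D ^ 2 * (\<Prod>x\<leftarrow>xs. poly (pderiv Q) x)"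
    by (simp only: map_append prod_list.append list.map prod_list.Cons prod_list.Nil
        old_roots new_root mult_1_right) (simp add: power2_eq_square mult_ac)
  have sign: "Suc n * (Suc n - 1) div 2 = n * (n - 1) div 2 + n"
    by (cases n) simp_all
  show ?case
    unfolding lhs rhs[unfolded P_def] snoc.IH[folded n_def Q_def]
    unfolding \<open>length (xs @ [y]) = Suc n\<close> sign power_add
    by (simp add: mult_ac)
qed simp

lemma proots_prod_linear: "proots (\<Prod>x\<in>#A. [:-x, 1:]) = A"
  for A :: "'a::idom multiset"
proof (induction A)
  case (add x A)
  have "proots ([:-x, 1:] * (\<Prod>x\<in>#A. [:-x, 1:]))
      = proots [:-x, 1:] + proots (\<Prod>x\<in>#A. [:-x, 1:])"
    by (rule proots_mult) auto
  then show ?case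
    using add by simp
qed simp

lemma alg_closed_proots_factorization:
  fixes p :: "'a::alg_closed_field poly"
  assumes "p \<noteq> 0"
  shows "p = smult (lead_coeff p) (\<Prod>x\<in>#proots p. [:-x, 1:])" and "size (proots p) = degree p"
proof -
  obtain A where "size A = degree p" and p: "p = smult (lead_coeff p) (\<Prod>x\<in>#A. [:-x, 1:])"
    using alg_closed_imp_factorization[OF assms] by blast
  moreover have "proots p = A"
    using assms by (subst p) (simp add: proots_prod_linear)
  ultimately show "p = smult (lead_coeff p) (\<Prod>x\<in>#proots p. [:-x, 1:])"
    and "size (proots p) = degree p"
    by simp_all
qed

lemma map_poly_to_ac_mult: "map_poly to_ac (p * q) = map_poly to_ac p * map_poly to_ac q"
  by (rule poly_eqI) (simp add: coeff_map_poly coeff_mult to_ac_sum)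

lemma map_poly_to_ac_prod_list:
  "map_poly to_ac (prod_list ps) = (\<Prod>p\<leftarrow>ps. map_poly to_ac p)"
  by (induction ps) (simp_all add: map_poly_to_ac_mult)

lemma map_poly_to_ac_pderiv: "map_poly to_ac (pderiv p) = pderiv (map_poly to_ac p)"
  by (rule poly_eqI) (simp add: coeff_map_poly coeff_pderiv)

lemma poly_map_poly_to_ac: "poly (map_poly to_ac p) (to_ac x) = to_ac (poly p x)"
  by (induction p) (simp_all add: map_poly_pCons)

lemma mset_roots_ac: "mset (roots_ac f) = proots (map_poly to_ac f)"
  unfolding roots_ac_def by (rule someI_ex) (rule ex_mset)

lemma roots_ac_monic:
  assumes "lead_coeff f = 1"
  shows "map_poly to_ac f = (\<Prod>x\<leftarrow>roots_ac f. [:-x, 1:])" and "length (roots_ac f) = degree f"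
proof -
  have lc: "lead_coeff (map_poly to_ac f) = 1"
    using assms by (simp add: lead_coeff_map_poly_nz)
  then have "map_poly to_ac f \<noteq> 0"
    by auto
  note split = alg_closed_proots_factorization[OF this, folded mset_roots_ac]
  show "map_poly to_ac f = (\<Prod>x\<leftarrow>roots_ac f. [:-x, 1:])"
    using split(1) by (simp add: lc prod_mset_prod_list flip: mset_map)
  show "length (roots_ac f) = degree f"
    using split(2) by (simp add: degree_map_poly)
qed

lemma disc_eq_prod_critical_values:
  fixes f :: "'a::field poly"
  assumes monic: "lead_coeff f = 1" and deg: "degree f = m" and "m \<ge> 2"
    and pderiv_f: "pderiv f = smult c (\<Prod>t\<leftarrow>ts. [:-t, 1:])"
  shows "disc f = (-1) ^ (m * (m - 1) div 2) * c ^ m * (\<Prod>t\<leftarrow>ts. (-1) ^ m * poly f t)"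
proof -
  define rs where "rs = roots_ac f"
  define F where "F = map_poly to_ac f"
  have F: "F = (\<Prod>r\<leftarrow>rs. [:-r, 1:])" and len: "length rs = m"
    using roots_ac_monic[OF monic] by (simp_all add: F_def rs_def deg)
  have pderiv_F: "poly (pderiv F) x = to_ac c * (\<Prod>t\<leftarrow>ts. x - to_ac t)" for x
    unfolding F_def map_poly_to_ac_pderiv[symmetric] pderiv_f
    by (simp add: map_poly_smult map_poly_to_ac_prod_list o_def map_poly_pCons poly_prod_linear)
  have values_f: "(\<Prod>r\<leftarrow>rs. r - to_ac t) = to_ac ((-1) ^ m * poly f t)" for t
  proof -
    have "to_ac (poly f t) = poly F (to_ac t)"
      by (simp add: F_def poly_map_poly_to_ac)
    also have "\<dots> = (\<Prod>r\<leftarrow>rs. to_ac t - r)"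
      unfolding F by (rule poly_prod_linear)
    finally show ?thesis
      by (simp add: prod_list_map_diff_commute len flip: mult.assoc power_mult_distrib)
  qed
  have "(\<Prod>j<length rs. \<Prod>i<j. (rs ! i - rs ! j) ^ 2)
      = (-1) ^ (m * (m - 1) div 2) * (\<Prod>r\<leftarrow>rs. poly (pderiv F) r)"
    using prod_sq_diffs_eq_prod_pderiv[of rs] by (simp only: len flip: F)
  also have "(\<Prod>r\<leftarrow>rs. poly (pderiv F) r)
      = to_ac c ^ m * (\<Prod>r\<leftarrow>rs. \<Prod>t\<leftarrow>ts. r - to_ac t)"
    by (simp add: pderiv_F prod_list_map_const_mult len)
  also have "(\<Prod>r\<leftarrow>rs. \<Prod>t\<leftarrow>ts. r - to_ac t) = (\<Prod>t\<leftarrow>ts. \<Prod>r\<leftarrow>rs. r - to_ac t)"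
    by (rule prod_list_map_swap)
  also have "\<dots> = to_ac (\<Prod>t\<leftarrow>ts. (-1) ^ m * poly f t)"
    by (simp only: values_f to_ac_prod_list map_map o_def)
  finally have discriminant: "(\<Prod>j<length rs. \<Prod>i<j. (rs ! i - rs ! j) ^ 2)
      = to_ac ((-1) ^ (m * (m - 1) div 2) * c ^ m * (\<Prod>t\<leftarrow>ts. (-1) ^ m * poly f t))"
    by simp
  have "degree f \<noteq> 1"
    using deg \<open>m \<ge> 2\<close> by simp
  then show ?thesis
    unfolding disc_def Let_def monic to_ac_1 power_one mult_1_left
    by (simp only: discriminant of_ac_to_ac if_False flip: rs_def)
qed

lemma pth_power_inj:
  fixes x y :: "'a::field"
  assumes "prime p" and "CHAR('a) = p" and "x ^ p = y ^ p"
  shows "x = y"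
proof -
  have "((x - y) + y) ^ p = (x - y) ^ p + y ^ p"
    by (rule freshmans_dream) (use assms in auto)
  then have "(x - y) ^ p = 0"
    using assms(3) by simp
  then show ?thesis
    by simp
qed

lemma exists_pth_root:
  fixes z :: "'a::{field,finite}"
  assumes "prime p" and "CHAR('a) = p"
  obtains y where "y ^ p = z"
proof -
  have "inj (\<lambda>y::'a. y ^ p)"
    by (rule injI) (rule pth_power_inj[OF assms])
  then have "surj (\<lambda>y::'a. y ^ p)"
    by (rule finite_UNIV_inj_surj[OF finite_UNIV])
  then show ?thesis
    using that by (metis surjD)
qed

lemma monic_add_lower_degree:
  fixes g h :: "'a::comm_ring_1 poly"
  assumes "lead_coeff g = 1" and "degree g = m" and "degree h < m"
  shows "lead_coeff (g + h) = 1" and "degree (g + h) = m"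
proof -
  show deg: "degree (g + h) = m"
    using assms(2,3) degree_add_eq_left by fastforce
  show "lead_coeff (g + h) = 1"
    using assms by (simp add: deg coeff_eq_0)
qed

context
  fixes p :: nat
  assumes prime: "prime p" and char: "CHAR('a::{field,finite}) = p"
begin

lemma of_nat_eq_0_iff_dvd: "of_nat n = (0::'a) \<longleftrightarrow> p dvd n"
  using char by (simp add: of_nat_eq_0_iff_char_dvd)

lemma of_nat_char_eq_0: "of_nat p = (0::'a)"
  by (simp add: of_nat_eq_0_iff_dvd)

lemma char_ge_2: "p \<ge> 2"
  using prime by (rule prime_ge_2_nat)

lemma exists_monic_disc_degree_char:
  "\<exists>f::'a poly. lead_coeff f = 1 \<and> degree f = p \<and> disc f = d"
proof -
  define \<epsilon> :: 'a where "\<epsilon> = (-1) ^ (p * (p - 1) div 2)"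
  obtain c where c: "c ^ p = \<epsilon> * d"
    using exists_pth_root[OF prime char] by blast
  define f where "f = monom 1 p + monom c 1"
  have "degree (monom c 1) < p"
    using char_ge_2 by (simp add: order.strict_trans1[OF degree_monom_le])
  then have monic: "lead_coeff f = 1" and deg: "degree f = p"
    unfolding f_def
    by (fact monic_add_lower_degree[OF lead_coeff_monom degree_monom_eq, OF one_neq_zero])+
  have "pderiv f = smult c (\<Prod>t\<leftarrow>[]. [:-t, 1:])"
    by (simp add: f_def pderiv_add pderiv_monom of_nat_char_eq_0 monom_0)
  from disc_eq_prod_critical_values[OF monic deg char_ge_2 this]
  have "disc f = \<epsilon> * c ^ p"
    by (simp add: \<epsilon>_def)
  also have "\<dots> = d"
    by (simp add: c \<epsilon>_def)
  finally show ?thesis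
    using monic deg by blast
qed

lemma exists_monic_disc_degree_multiple_char:
  assumes "p dvd m" and "p < m"
  shows "\<exists>f::'a poly. lead_coeff f = 1 \<and> degree f = m \<and> disc f = d"
proof -
  define \<epsilon> :: 'a where "\<epsilon> = (-1) ^ (m * (m - 1) div 2)"
  obtain y where y: "y ^ p = \<epsilon> * d"
    using exists_pth_root[OF prime char] by blast
  define Y :: "'a poly" where "Y = [:-1, 1:] ^ p"
  define f where "f = monom 1 m + ([:0, 1:] * Y + [:(-1) ^ m * y - 1:])"
  obtain k where m: "m = p * k"
    using assms(1) by blast
  then have "1 < k"
    using assms(2) by simp
  then have "p * 2 \<le> m"
    unfolding m by (intro mult_le_mono2) simp
  have "degree ([:0, 1:] * Y + [:(-1) ^ m * y - 1:]) = p + 1"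
    by (subst degree_add_eq_left) (simp_all add: Y_def degree_linear_power)
  then have "degree ([:0, 1:] * Y + [:(-1) ^ m * y - 1:]) < m"
    using char_ge_2 \<open>p * 2 \<le> m\<close> by simp
  then have monic: "lead_coeff f = 1" and deg: "degree f = m"
    unfolding f_def
    by (fact monic_add_lower_degree[OF lead_coeff_monom degree_monom_eq, OF one_neq_zero])+
  have "of_nat m = (0::'a)"
    using assms(1) by (simp add: of_nat_eq_0_iff_dvd)
  then have "pderiv f = smult 1 (\<Prod>t\<leftarrow>replicate p 1. [:-t, 1:])"
    by (simp add: of_nat_char_eq_0 f_def Y_def pderiv_add pderiv_monom pderiv_mult pderiv_power
        pderiv_pCons)
  from disc_eq_prod_critical_values[OF monic deg _ this]
  have "disc f = \<epsilon> * ((-1) ^ m * poly f 1) ^ p"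
    using char_ge_2 \<open>p < m\<close> by (simp add: \<epsilon>_def)
  also have "(-1) ^ m * poly f 1 = y"
    using char_ge_2 by (simp add: f_def Y_def poly_monom power_0_left)
  also have "\<epsilon> * y ^ p = d"
    by (simp add: y \<epsilon>_def)
  finally show ?thesis
    using monic deg by blast
qed

lemma exists_monic_disc_degree_multiple_char_plus_1:
  assumes "p dvd m - 1" and "p < m"
  shows "\<exists>f::'a poly. lead_coeff f = 1 \<and> degree f = m \<and> disc f = d"
proof -
  define n where "n = m - p"
  define \<sigma> :: 'a where "\<sigma> = (-1) ^ m"
  define s :: 'a where "s = (-1) ^ (m * (m - 1) div 2 + m * (n - 1))"
  obtain y where y: "y ^ p = s * d"
    using exists_pth_root[OF prime char] by blast
  define Y :: "'a poly" where "Y = [:-1, 1:] ^ p"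
  define f where "f = [:0, 1:] ^ n * Y + (monom (\<sigma> * y - 1) p + 1)"
  have "n \<ge> 1"
    using assms(2) by (simp add: n_def)
  have lc_main: "lead_coeff ([:0, 1:] ^ n * Y) = 1"
    by (simp add: Y_def lead_coeff_mult lead_coeff_power)
  have deg_main: "degree ([:0, 1:] ^ n * Y) = m"
    using assms(2) by (simp add: Y_def n_def degree_mult_eq degree_linear_power)
  have "degree (monom (\<sigma> * y - 1) p + 1) < m"
    using assms(2) char_ge_2 by (intro le_less_trans[OF degree_add_le_max])
      (simp add: order.strict_trans1[OF degree_monom_le])
  then have monic: "lead_coeff f = 1" and deg: "degree f = m"
    unfolding f_def by (fact monic_add_lower_degree[OF lc_main deg_main])+
  have "n - 1 = (m - 1) - p"
    by (simp add: n_def)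
  then have "p dvd n - 1"
    using dvd_diff_nat[OF assms(1) dvd_refl] by simp
  then have "of_nat (n - 1) = (0::'a)"
    by (simp add: of_nat_eq_0_iff_dvd)
  then have "of_nat n = (1::'a)"
    using \<open>n \<ge> 1\<close> by simp
  then have "pderiv f = smult 1 (\<Prod>t\<leftarrow>replicate (n - 1) 0 @ replicate p 1. [:-t, 1:])"
    by (simp add: of_nat_char_eq_0 f_def Y_def pderiv_add pderiv_monom pderiv_mult pderiv_power
        pderiv_pCons)
  from disc_eq_prod_critical_values[OF monic deg _ this]
  have "disc f
      = (-1) ^ (m * (m - 1) div 2) * (\<sigma> * poly f 0) ^ (n - 1) * (\<sigma> * poly f 1) ^ p"
    using char_ge_2 \<open>p < m\<close> by (simp add: \<sigma>_def)
  also have "poly f 0 = 1"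
    using char_ge_2 \<open>n \<ge> 1\<close> by (simp add: f_def Y_def poly_monom power_0_left)
  also have "\<sigma> * poly f 1 = y"
    using char_ge_2 by (simp add: f_def Y_def poly_monom power_0_left \<sigma>_def)
  also have "(-1) ^ (m * (m - 1) div 2) * (\<sigma> * 1) ^ (n - 1) = s"
    by (simp add: s_def \<sigma>_def power_add power_mult)
  also have "s * y ^ p = d"
    by (simp add: y s_def)
  finally show ?thesis
    using monic deg by blast
qed

lemma exists_monic_disc_degree_generic:
  assumes "\<not> p dvd m" and "\<not> p dvd m - 1" and "p \<le> m"
  shows "\<exists>f::'a poly. lead_coeff f = 1 \<and> degree f = m \<and> disc f = d"
proof -
  have "m \<noteq> p" and "m \<noteq> p + 1"
    using assms(1,2) by auto
  then have "p + 2 \<le> m"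
    using assms(3) by simp
  define e where "e = m - 1 - p"
  define E :: 'a where "E = of_nat e"
  have "e \<ge> 1"
    using \<open>p + 2 \<le> m\<close> by (simp add: e_def)
  have "m - 1 = e + p" and "m = (e + 1) + p"
    using \<open>p + 2 \<le> m\<close> by (simp_all add: e_def)
  then have "\<not> p dvd e" and "\<not> p dvd e + 1"
    using assms(1,2) by (metis dvd_add_triv_right_iff)+
  moreover have "E + 1 = of_nat (e + 1)"
    by (simp add: E_def)
  ultimately have "E \<noteq> 0" and "E + 1 \<noteq> 0"
    by (simp_all only: E_def of_nat_eq_0_iff_dvd not_False_eq_True)
  \<comment> \<open>so that the critical points of x^e (x - r) are 0 and e r / (e + 1) = 1\<close>
  define r where "r = (E + 1) / E"
  have Er: "E * r = E + 1"
    using \<open>E \<noteq> 0\<close> by (simp add: r_def)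
  then have "1 - r \<noteq> 0"
    by auto
  define \<sigma> :: 'a where "\<sigma> = (-1) ^ m"
  define K where "K = (-1) ^ (m * (m - 1) div 2) * (E + 1) ^ m * \<sigma> ^ (e - 1) * \<sigma> * \<sigma> ^ p"
  have "K \<noteq> 0"
    using \<open>E + 1 \<noteq> 0\<close> by (simp add: K_def \<sigma>_def)
  obtain y where y: "y ^ p = (d / K - 1) / (1 - r)"
    using exists_pth_root[OF prime char] by blast
  define w where "w = 1 - y"
  define x :: "'a poly" where "x = [:0, 1:]"
  define R where "R = [:-r, 1:]"
  define A where "A = x ^ e * R"
  define W where "W = [:-w, 1:] ^ p"
  define f where "f = A * W + 1"
  have lc_main: "lead_coeff (A * W) = 1"
    unfolding A_def W_def lead_coeff_mult lead_coeff_power by (simp add: x_def R_def)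
  have deg_main: "degree (A * W) = m"
    using \<open>m = (e + 1) + p\<close>
    by (simp add: A_def W_def x_def R_def degree_mult_eq degree_linear_power
        del: mult_pCons_left mult_pCons_right)
  have "degree (1::'a poly) < m"
    using \<open>p + 2 \<le> m\<close> by simp
  then have monic: "lead_coeff f = 1" and deg: "degree f = m"
    unfolding f_def by (fact monic_add_lower_degree[OF lc_main deg_main])+
  have "pderiv (x ^ e) = smult E (x ^ (e - 1))" and "pderiv R = 1"
    by (simp_all add: x_def R_def E_def pderiv_power pderiv_pCons)
  then have "pderiv A = x ^ e + smult E (x ^ (e - 1)) * R"
    unfolding A_def pderiv_mult by (simp add: mult.commute)
  also have "x ^ e = x ^ (e - 1) * x"
    using \<open>e \<ge> 1\<close> by (simp flip: power_Suc2)
  also have "x ^ (e - 1) * x + smult E (x ^ (e - 1)) * R = x ^ (e - 1) * (x + smult E R)"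
    by (simp add: algebra_simps)
  also have "x + smult E R = smult (E + 1) [:-1, 1:]"
    using Er by (simp add: x_def R_def algebra_simps)
  finally have "pderiv A = smult (E + 1) (x ^ (e - 1) * [:-1, 1:])"
    by (simp only: mult_smult_right)
  moreover have "pderiv W = 0"
    by (simp add: W_def pderiv_power of_nat_char_eq_0)
  moreover have "(\<Prod>t\<leftarrow>replicate (e - 1) 0 @ [1] @ replicate p w. [:-t, 1:])
      = x ^ (e - 1) * [:-1, 1:] * W"
    by (simp add: x_def W_def mult.assoc del: mult_pCons_left mult_pCons_right)
  ultimately have pderiv_f:
    "pderiv f = smult (E + 1) (\<Prod>t\<leftarrow>replicate (e - 1) 0 @ [1] @ replicate p w. [:-t, 1:])"
    by (simp add: f_def pderiv_add pderiv_mult mult.commute)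
  have "poly f 0 = 1" and "poly f w = 1"
    using \<open>e \<ge> 1\<close> char_ge_2 by (simp_all add: f_def A_def W_def x_def R_def power_0_left)
  with disc_eq_prod_critical_values[OF monic deg _ pderiv_f]
  have "disc f = K * poly f 1"
    using \<open>p + 2 \<le> m\<close> by (simp add: K_def \<sigma>_def mult_ac)
  also have "poly f 1 = (1 - r) * y ^ p + 1"
    by (simp add: f_def A_def W_def x_def R_def w_def)
  also have "K * \<dots> = d"
    using \<open>K \<noteq> 0\<close> \<open>1 - r \<noteq> 0\<close> by (simp add: y field_simps)
  finally show ?thesis
    using monic deg by blast
qed

end

theorem theorem6p1:
  fixes p m :: nat and d :: "'a::{field, finite}"
  assumes "prime p" and "CHAR('a) = p" and "m \<ge> p"
  shows "\<exists>f :: 'a poly. lead_coeff f = 1 \<and> degree f = m \<and> disc f = d"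
proof -
  consider "m = p" | "p dvd m" "p < m" | "p dvd m - 1" "p < m" | "\<not> p dvd m" "\<not> p dvd m - 1"
    using assms(3) by fastforce
  then show ?thesis
  proof cases
    case 1
    then show ?thesis
      using exists_monic_disc_degree_char[OF assms(1,2)] by simp
  next
    case 2
    then show ?thesis
      by (rule exists_monic_disc_degree_multiple_char[OF assms(1,2)])
  next
    case 3
    then show ?thesis
      by (rule exists_monic_disc_degree_multiple_char_plus_1[OF assms(1,2)])
  next
    case 4
    then show ?thesis
      using assms(3) by (rule exists_monic_disc_degree_generic[OF assms(1,2)])
  qed
qed

end
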